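(* Let $\mathcal A\subseteq E^\infty$, let $V\subseteq E$ be a block subspace, $\vec v$ a finite block sequence and $T$ a $(V,\vec v)$-rule, and suppose that for every block subspace $W\subseteq V$, player I has no strategy in $B^T_W(\vec v)$ to play in $\mathcal A$. (a) If $|\vec v|$ is odd, then there is a block subspace $X\subseteq V$ such that for every block subspace $Y\subseteq X$ there is $x\in Y$ with $\vec v\,\hat{}\,x\in T$ such that for every block subspace $W\subseteq X$, player I has no strategy in $B^T_W(\vec v\,\hat{}\,x)$ to play in $\mathcal A$. (b) If $|\vec v|$ is even, then there is a block subspace $X\subseteq V$ with $\vec v\,\hat{}\,x\in T$ for all non-zero $x\in X$, such that for every non-zero $x\in X$ and every block subspace $W\subseteq X$, player I has no strategy in $B^T_W(\vec v\,\hat{}\,x)$ to play in $\mathcal A$.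
   Context: Fix a countable field $\mathfrak F$ and let $E$ be the countable-dimensional $\mathfrak F$-vector space with basis $(e_n)$. For non-zero $x=\sum a_ne_n$, ${\rm supp}\,x=\{n:a_n\neq0\}$. A block sequence is a sequence of non-zero vectors with $\max{\rm supp}\,x_n<\min{\rm supp}\,x_{n+1}$. "Subspace" means an infinite-dimensional block subspace of $E$; vectors played are non-zero. For a subspace $X$, $X[k]=\{x\in X\setminus\{0\}:k<\min{\rm supp}\,x\}$. $E^\infty=E^{\mathbb N}$ with the product of discrete topologies; $E^{<\infty}$ is the set of finite block sequences; $\hat{}$ is concatenation; $T_{\vec x}=\{\vec y:\vec x\,\hat{}\,\vec y\in T\}$. Game $B_V(\vec v)$: if $|\vec v|$ is even: II plays a subspace $Z_0\subseteq V$; I plays non-zero $x_0\in Z_0$ and $n_0\in\mathbb N$; II plays non-zero $y_0\in V[n_0]$ and a subspace $Z_1\subseteq V$; I plays $x_1\in Z_1$, $n_1$; II plays $y_1\in V[n_1]$, $Z_2$; etc.; outcome $\vec v\,\hat{}\,(x_0,y_0,x_1,y_1,\dots)$. If $|\vec v|$ is odd: I plays $n_0$; II plays $y_0\in V[n_0]$ and $Z_0\subseteq V$; I plays $x_0\in Z_0$ and $n_1$; II plays $y_1\in V[n_1]$ and $Z_1$; etc.; outcome $\vec v\,\hat{}\,(y_0,x_0,y_1,x_1,\dots)$. A $(V,\vec v)$-rule is a set $T\subseteq E^{<\infty}$ with $\vec v\in T$ such that: (i) if $\vec y\in T$, $|\vec y|$ odd, then for every subspace $Z\subseteq V$ there is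 $z\in Z$ with $\vec y\,\hat{}\,z\in T$; (ii) if $\vec y\in T$, $|\vec y|$ even, then there is $n$ with $\vec y\,\hat{}\,z\in T$ for all $z\in V[n]$. The $T$-induced subgame $B^T_V(\vec v)$ is played as $B_V(\vec v)$ with the additional requirement that every position, i.e. the finite sequence of vectors played so far listed in the order they appear in the outcome, belongs to $T_{\vec v}$. A strategy to play in $\mathcal A$ is one all of whose outcomes lie in $\mathcal A$. *)

theory Defs
  imports Main "HOL-Library.Countable"
begin

text \<open>Vectors of E are finitely supported functions nat => F (coordinates w.r.t. the basis (e_n)).
  The countable field F is a type variable of class {field, countable}.\<close>

type_synonym 'f vec = "nat \<Rightarrow> 'f"

abbreviation zvec :: "('f::zero) vec" where "zvec \<equiv> (\<lambda>_. 0)"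

definition Evec :: "('f::field) vec set" where
  "Evec = {x. finite {n. x n \<noteq> 0}}"

definition supp :: "('f::field) vec \<Rightarrow> nat set" where
  "supp x = {n. x n \<noteq> 0}"

definition block_seq :: "(nat \<Rightarrow> ('f::field) vec) \<Rightarrow> bool" where
  "block_seq b \<longleftrightarrow> (\<forall>n. b n \<in> Evec \<and> b n \<noteq> zvec) \<and>
     (\<forall>n. Max (supp (b n)) < Min (supp (b (Suc n))))"

definition fin_block :: "('f::field) vec list \<Rightarrow> bool" where
  "fin_block xs \<longleftrightarrow> (\<forall>x\<in>set xs. x \<in> Evec \<and> x \<noteq> zvec) \<and>
     (\<forall>i. Suc i < length xs \<longrightarrow> Max (supp (xs ! i)) < Min (supp (xs ! Suc i)))"

definition lspan :: "(nat \<Rightarrow> ('f::field) vec) \<Rightarrow> 'f vec set" where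
  "lspan b = {x. \<exists>N c. x = (\<lambda>k. \<Sum>i<N. c i * b i k)}"

definition block_subspace :: "('f::field) vec set \<Rightarrow> bool" where
  "block_subspace X \<longleftrightarrow> (\<exists>b. block_seq b \<and> X = lspan b)"

definition tail :: "('f::field) vec set \<Rightarrow> nat \<Rightarrow> 'f vec set" where
  "tail X k = {x\<in>X. x \<noteq> zvec \<and> k < Min (supp x)}"

definition is_rule :: "('f::field) vec set \<Rightarrow> 'f vec list \<Rightarrow> 'f vec list set \<Rightarrow> bool" where
  "is_rule V v T \<longleftrightarrow> T \<subseteq> {xs. fin_block xs} \<and> v \<in> T \<and>
     (\<forall>y\<in>T. odd (length y) \<longrightarrow>
        (\<forall>Z. block_subspace Z \<and> Z \<subseteq> V \<longrightarrow> (\<exists>z\<in>Z. z \<noteq> zvec \<and> y @ [z] \<in> T))) \<and>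
     (\<forall>y\<in>T. even (length y) \<longrightarrow> (\<exists>n. \<forall>z\<in>tail V n. y @ [z] \<in> T))"

definition outcome :: "'a list \<Rightarrow> (nat \<Rightarrow> 'a) \<Rightarrow> (nat \<Rightarrow> 'a)" where
  "outcome u p = (\<lambda>i. if i < length u then u ! i else p (i - length u))"

text \<open>A strategy sigma for I maps the list of II's moves so far
  to I's next move (x, n).  II's k-th move is m k = (y_(k-1), Z_k) (the vector
  component of m 0 is ignored).  The vectors are played in the order x0, y0, x1, y1, ...\<close>
definition I_wins_even ::
  "'f vec list set \<Rightarrow> ('f::field) vec set \<Rightarrow> 'f vec list \<Rightarrow> (nat \<Rightarrow> 'f vec) set
   \<Rightarrow> (('f vec \<times> 'f vec set) list \<Rightarrow> 'f vec \<times> nat) \<Rightarrow> bool" where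
  "I_wins_even T W u A \<sigma> \<longleftrightarrow>
    (\<forall>m :: nat \<Rightarrow> 'f vec \<times> 'f vec set.
      let Im = (\<lambda>k. \<sigma> (map m [0..<Suc k]));
          x = (\<lambda>k. fst (Im k)); n = (\<lambda>k. snd (Im k));
          y = (\<lambda>k. fst (m (Suc k))); Z = (\<lambda>k. snd (m k));
          p = (\<lambda>i. if even i then x (i div 2) else y (i div 2));
          IIz = (\<lambda>k. block_subspace (Z k) \<and> Z k \<subseteq> W);
          Ix = (\<lambda>k. x k \<in> Z k \<and> x k \<noteq> zvec \<and> u @ map p [0..<2*k+1] \<in> T);
          IIy = (\<lambda>k. y k \<in> tail W (n k) \<and> u @ map p [0..<2*k+2] \<in> T)
      in (\<forall>k. (\<forall>j<k. IIz j \<and> Ix j \<and> IIy j) \<and> IIz k \<longrightarrow> Ix k) \<and>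
         ((\<forall>k. IIz k \<and> IIy k) \<longrightarrow> outcome u p \<in> A))"

text \<open>I's k-th move is sigma applied to II's first k moves,
  = (x_(k-1), n_k) (the vector component of I's 0-th move is ignored).  II's k-th move is
  m k = (y_k, Z_k).  The vectors are played in the order y0, x0, y1, x1, ...\<close>
definition I_wins_odd ::
  "'f vec list set \<Rightarrow> ('f::field) vec set \<Rightarrow> 'f vec list \<Rightarrow> (nat \<Rightarrow> 'f vec) set
   \<Rightarrow> (('f vec \<times> 'f vec set) list \<Rightarrow> 'f vec \<times> nat) \<Rightarrow> bool" where
  "I_wins_odd T W u A \<sigma> \<longleftrightarrow>
    (\<forall>m :: nat \<Rightarrow> 'f vec \<times> 'f vec set.
      let Im = (\<lambda>k. \<sigma> (map m [0..<k]));
          x = (\<lambda>k. fst (Im (Suc k))); n = (\<lambda>k. snd (Im k));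
          y = (\<lambda>k. fst (m k)); Z = (\<lambda>k. snd (m k));
          p = (\<lambda>i. if even i then y (i div 2) else x (i div 2));
          II = (\<lambda>k. y k \<in> tail W (n k) \<and> u @ map p [0..<2*k+1] \<in> T \<and>
                    block_subspace (Z k) \<and> Z k \<subseteq> W);
          Ix = (\<lambda>k. x k \<in> Z k \<and> x k \<noteq> zvec \<and> u @ map p [0..<2*k+2] \<in> T)
      in (\<forall>k. (\<forall>j<k. II j \<and> Ix j) \<and> II k \<longrightarrow> Ix k) \<and>
         ((\<forall>k. II k) \<longrightarrow> outcome u p \<in> A))"

definition I_has_strategy ::
  "'f vec list set \<Rightarrow> ('f::field) vec set \<Rightarrow> 'f vec list \<Rightarrow> (nat \<Rightarrow> 'f vec) set \<Rightarrow> bool" where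
  "I_has_strategy T W u A \<longleftrightarrow>
     (\<exists>\<sigma>. if even (length u) then I_wins_even T W u A \<sigma> else I_wins_odd T W u A \<sigma>)"

end

theory Submission
  imports Defs "HOL-Library.Countable_Set"
begin

(* Theorem 6 (the step in the determinacy argument for the games B_V).  Write S(W, x) for
   "player I has a strategy in B^T_W(v ^ x) to play in A".  The proof has three ingredients.

   Spans of block sequences are closed under linear combinations;
      every block subspace contains one living beyond any given coordinate; and by fusion
      a decreasing sequence X_0 \<supseteq> X_1 \<supseteq> ... has a block subspace X \<subseteq> X_0 that is almost
      contained in every X_k (X \<subseteq>* X_k: all vectors of X far enough out lie in X_k).
   2. Games.  S(W, x) passes
      from W to every W' \<subseteq>* W, and a strategy from position u can be assembled from
      strategies from the positions u ^ x reachable in one move (odd |u|: for all legal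
      vectors of II; even |u|: for some legal vector of I in every subspace of II).
   3. Diagonalization.  Since E is countable, enumerating it, deciding S for the k-th vector
      on X_(k+1) \<subseteq> X_k and fusing gives X \<subseteq> V on which S(W, x) holds for all or for no
      block W \<subseteq> X, for every x.
   Parts (a) and (b) then follow by combining 3 with the one-move composition of 2 and the
   hypothesis that I has no strategy from v below V. *)

section \<open>Linear spans and supports\<close>

definition lin_closed :: "('f::field) vec set \<Rightarrow> bool" where
  "lin_closed S \<longleftrightarrow> zvec \<in> S \<and> (\<forall>x\<in>S. \<forall>y\<in>S. (\<lambda>k. x k + y k) \<in> S) \<and>
     (\<forall>a. \<forall>x\<in>S. (\<lambda>k. a * x k) \<in> S)"

lemma sum_lessThan_truncate:
  "N1 \<le> (N::nat) \<Longrightarrow> (\<Sum>i<N. if i < N1 then f i else 0) = (\<Sum>i<N1. f i)"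
  by (induction N) (auto simp: lessThan_Suc le_Suc_eq)

lemma lspan_lin_closed: "lin_closed (lspan b)"
  unfolding lin_closed_def
proof (intro conjI ballI allI)
  show "zvec \<in> lspan b" unfolding lspan_def by (intro CollectI exI[of _ 0]) simp
next
  fix x y assume "x \<in> lspan b" "y \<in> lspan b"
  then obtain N1 c1 N2 c2 where x: "x = (\<lambda>k. \<Sum>i<N1. c1 i * b i k)"
      and y: "y = (\<lambda>k. \<Sum>i<N2. c2 i * b i k)"
    unfolding lspan_def by auto
  define N where "N = max N1 N2"
  define c where "c i = (if i < N1 then c1 i else 0) + (if i < N2 then c2 i else 0)" for i
  have "x k + y k = (\<Sum>i<N. c i * b i k)" for k
  proof -
    have "(\<Sum>i<N. c i * b i k) = (\<Sum>i<N. if i < N1 then c1 i * b i k else 0)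
                                + (\<Sum>i<N. if i < N2 then c2 i * b i k else 0)"
      unfolding sum.distrib[symmetric] by (intro sum.cong) (auto simp: c_def distrib_right)
    also have "\<dots> = x k + y k" unfolding x y N_def by (simp add: sum_lessThan_truncate)
    finally show ?thesis by simp
  qed
  then show "(\<lambda>k. x k + y k) \<in> lspan b" unfolding lspan_def by blast
next
  fix a x assume "x \<in> lspan b"
  then obtain N c where x: "x = (\<lambda>k. \<Sum>i<N. c i * b i k)" unfolding lspan_def by auto
  have "(\<lambda>k. a * x k) = (\<lambda>k. \<Sum>i<N. (a * c i) * b i k)"
    unfolding x by (simp add: sum_distrib_left mult.assoc)
  then show "(\<lambda>k. a * x k) \<in> lspan b"
    unfolding lspan_def by (intro CollectI exI[of _ N] exI[of _ "\<lambda>i. a * c i"])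
qed

lemma lin_closed_sum:
  assumes "lin_closed S" "\<forall>i<M. y i \<in> S"
  shows "(\<lambda>k. \<Sum>i<(M::nat). c i * y i k) \<in> S"
  using assms(2)
proof (induction M)
  case 0 then show ?case using assms(1) unfolding lin_closed_def by simp
next
  case (Suc M)
  have "(\<lambda>k. \<Sum>i<M. c i * y i k) \<in> S" "(\<lambda>k. c M * y M k) \<in> S"
    using Suc assms(1) unfolding lin_closed_def by simp_all
  then have "(\<lambda>k. (\<Sum>i<M. c i * y i k) + c M * y M k) \<in> S"
    using assms(1) unfolding lin_closed_def by simp
  then show ?case by (simp add: lessThan_Suc add.commute)
qed

lemma lspan_least: "lin_closed S \<Longrightarrow> (\<And>i. y i \<in> S) \<Longrightarrow> lspan y \<subseteq> S"
  unfolding lspan_def using lin_closed_sum by blast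

lemma lspan_generator: "b j \<in> lspan b"
proof -
  have "b j = (\<lambda>k. \<Sum>i<Suc j. (if i = j then 1 else 0) * b i k)"
    by (simp add: if_distrib cong: if_cong)
  then show ?thesis unfolding lspan_def by (intro CollectI exI)
qed

lemma lspan_supp: "z \<in> lspan b \<Longrightarrow> z n \<noteq> 0 \<Longrightarrow> \<exists>i. b i n \<noteq> 0"
  unfolding lspan_def by (auto intro: ccontr)

lemma Evec_lin_closed: "lin_closed Evec"
  unfolding lin_closed_def Evec_def
proof (intro conjI ballI allI; simp only: mem_Collect_eq)
  fix x y :: "'a vec" assume "finite {n. x n \<noteq> 0}" "finite {n. y n \<noteq> 0}"
  then show "finite {n. x n + y n \<noteq> 0}" by (rule finite_subset[rotated, OF finite_UnI]) auto
next
  fix a and x :: "'a vec" assume "finite {n. x n \<noteq> 0}"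
  then show "finite {n. a * x n \<noteq> 0}" by (rule finite_subset[rotated]) auto
qed simp

lemma in_supp: "n \<in> supp x \<longleftrightarrow> x n \<noteq> 0"
  unfolding supp_def by simp

lemma Min_supp_in: "x \<in> Evec \<Longrightarrow> x \<noteq> zvec \<Longrightarrow> Min (supp x) \<in> supp x"
  unfolding Evec_def supp_def by (intro Min_in) auto

lemma supp_bounds: "x \<in> Evec \<Longrightarrow> n \<in> supp x \<Longrightarrow> Min (supp x) \<le> n \<and> n \<le> Max (supp x)"
  unfolding Evec_def supp_def by simp

section \<open>Block sequences and block subspaces\<close>

lemma block_seq_nonzero: "block_seq b \<Longrightarrow> b i \<in> Evec \<and> b i \<noteq> zvec"
  unfolding block_seq_def by blast

lemma block_seq_Min_le_Max: "block_seq b \<Longrightarrow> Min (supp (b i)) \<le> Max (supp (b i))"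
  using block_seq_nonzero[of b i] Min_supp_in supp_bounds by blast

lemma block_seq_ordered:
  assumes "block_seq b" "i < j" shows "Max (supp (b i)) < Min (supp (b j))"
  using assms(2)
proof (induction j)
  case (Suc j)
  have step: "Max (supp (b j)) < Min (supp (b (Suc j)))"
    using assms(1) unfolding block_seq_def by blast
  show ?case
  proof (cases "i = j")
    case False
    then have "Max (supp (b i)) < Min (supp (b j))" using Suc by simp
    then show ?thesis using step block_seq_Min_le_Max[OF assms(1), of j] by simp
  qed (use step in simp)
qed simp

lemma block_seq_disjoint:
  assumes "block_seq b" "i \<noteq> j" "b i n \<noteq> 0" shows "b j n = 0"
proof (rule ccontr)
  assume "b j n \<noteq> 0"
  then have "Min (supp (b j)) \<le> n \<and> n \<le> Max (supp (b j))"
      "Min (supp (b i)) \<le> n \<and> n \<le> Max (supp (b i))"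
    using assms(3) supp_bounds block_seq_nonzero[OF assms(1)] by (auto simp: in_supp)
  then show False
    using assms(2) block_seq_ordered[OF assms(1), of i j] block_seq_ordered[OF assms(1), of j i]
    by (cases "i < j") auto
qed

lemma block_seq_Min_ge: "block_seq b \<Longrightarrow> i \<le> Min (supp (b i))"
proof (induction i)
  case (Suc i)
  then show ?case using block_seq_ordered[of b i "Suc i"] block_seq_Min_le_Max[of b i] by simp
qed simp

lemma block_subspace_lin_closed: "block_subspace X \<Longrightarrow> lin_closed X"
  unfolding block_subspace_def using lspan_lin_closed by blast

lemma zero_in_block_subspace: "block_subspace X \<Longrightarrow> zvec \<in> X"
  using block_subspace_lin_closed unfolding lin_closed_def by blast

lemma block_subspace_Evec: "block_subspace X \<Longrightarrow> X \<subseteq> Evec"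
  unfolding block_subspace_def
  using lspan_least[OF Evec_lin_closed] block_seq_nonzero by blast

lemma lspan_late_vector:
  assumes bs: "block_seq b" and y: "y \<in> lspan b" "Max (supp (b K)) < Min (supp y)"
  shows "y \<in> lspan (\<lambda>i. b (i + Suc K))"
proof -
  obtain M c where yM: "y = (\<lambda>j. \<Sum>i<M. c i * b i j)" using y(1) unfolding lspan_def by auto
  have yE: "y \<in> Evec" using y(1) lspan_least[OF Evec_lin_closed] block_seq_nonzero[OF bs] by blast
  have early_zero: "c i = 0" if "i \<le> K" "i < M" for i
  proof -
    define j0 where "j0 = Min (supp (b i))"
    have bi: "b i j0 \<noteq> 0"
      unfolding j0_def using Min_supp_in[of "b i"] block_seq_nonzero[OF bs, of i] by (simp add: in_supp)
    have "j0 \<le> Max (supp (b K))"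
      using block_seq_Min_le_Max[OF bs, of i] block_seq_ordered[OF bs, of i K]
        block_seq_Min_le_Max[OF bs, of K] \<open>i \<le> K\<close> unfolding j0_def
      by (cases "i = K") auto
    then have "y j0 = 0" using y(2) supp_bounds[OF yE, of j0] by (auto simp: in_supp)
    moreover have "y j0 = (\<Sum>i'<M. if i' = i then c i * b i j0 else 0)"
      unfolding yM using block_seq_disjoint[OF bs _ bi] by (intro sum.cong) auto
    ultimately show ?thesis using bi \<open>i < M\<close> by simp
  qed
  have "y = (\<lambda>j. \<Sum>i<M - Suc K. c (i + Suc K) * b (i + Suc K) j)"
  proof
    fix j
    have "y j = (\<Sum>i\<in>{Suc K..<M}. c i * b i j)"
      unfolding yM using early_zero
      by (intro sum.mono_neutral_right) (auto simp: not_less_eq_eq)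
    also have "\<dots> = (\<Sum>i<M - Suc K. c (i + Suc K) * b (i + Suc K) j)"
      by (rule sum.reindex_bij_witness[of _ "\<lambda>i. i + Suc K" "\<lambda>i. i - Suc K"]) auto
    finally show "y j = (\<Sum>i<M - Suc K. c (i + Suc K) * b (i + Suc K) j)" .
  qed
  then show ?thesis
    unfolding lspan_def by (intro CollectI exI[of _ "M - Suc K"] exI[of _ "\<lambda>i. c (i + Suc K)"])
qed

lemma block_subspace_beyond:
  assumes "block_subspace Z"
  shows "\<exists>Z'. block_subspace Z' \<and> Z' \<subseteq> Z \<and> (\<forall>z\<in>Z'. z \<noteq> zvec \<longrightarrow> N < Min (supp z))"
proof -
  obtain b where b: "block_seq b" "Z = lspan b" using assms unfolding block_subspace_def by blast
  define b' where "b' = (\<lambda>i. b (i + Suc N))"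
  have bs': "block_seq b'" using b(1) unfolding b'_def block_seq_def by simp
  have sub: "lspan b' \<subseteq> Z"
    unfolding b'_def b(2) by (rule lspan_least[OF lspan_lin_closed lspan_generator])
  have "N < Min (supp z)" if z: "z \<in> lspan b'" "z \<noteq> zvec" for z
  proof -
    have "z \<in> Evec" using z lspan_least[OF Evec_lin_closed] block_seq_nonzero[OF bs'] by blast
    then have "z (Min (supp z)) \<noteq> 0" using Min_supp_in z(2) by (simp add: in_supp)
    then obtain i where "b' i (Min (supp z)) \<noteq> 0" using lspan_supp[OF z(1)] by blast
    then have "Min (supp (b' i)) \<le> Min (supp z)"
      using supp_bounds block_seq_nonzero[OF bs'] by (auto simp: in_supp)
    moreover have "i + Suc N \<le> Min (supp (b' i))" unfolding b'_def using block_seq_Min_ge[OF b(1)] by simp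
    ultimately show ?thesis by simp
  qed
  then show ?thesis using bs' sub unfolding block_subspace_def by blast
qed

lemma block_subspace_vector_beyond:
  assumes "block_subspace X" shows "\<exists>x\<in>X. x \<noteq> zvec \<and> N < Min (supp x)"
proof -
  obtain Z where Z: "block_subspace Z" "Z \<subseteq> X" "\<forall>z\<in>Z. z \<noteq> zvec \<longrightarrow> N < Min (supp z)"
    using block_subspace_beyond[OF assms] by blast
  obtain b where "block_seq b" "Z = lspan b" using Z(1) unfolding block_subspace_def by blast
  then have "b 0 \<in> Z" "b 0 \<noteq> zvec" using lspan_generator block_seq_nonzero by blast+
  then show ?thesis using Z by blast
qed

section \<open>Almost inclusion and fusion\<close>

definition almost_sub :: "('f::field) vec set \<Rightarrow> 'f vec set \<Rightarrow> bool" where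
  "almost_sub W Y \<longleftrightarrow> (\<exists>N. \<forall>y\<in>W. y \<noteq> zvec \<and> N < Min (supp y) \<longrightarrow> y \<in> Y)"

lemma almost_sub_trans_subset: "W \<subseteq> X \<Longrightarrow> almost_sub X Y \<Longrightarrow> almost_sub W Y"
  unfolding almost_sub_def by blast

lemma subset_almost_sub: "W \<subseteq> Y \<Longrightarrow> almost_sub W Y"
  unfolding almost_sub_def by blast

lemma almost_sub_shrink:
  assumes W: "block_subspace W" and WY: "almost_sub W Y" and Y: "block_subspace Y"
  shows "\<exists>W'. block_subspace W' \<and> W' \<subseteq> W \<and> W' \<subseteq> Y"
proof -
  obtain N where N: "\<forall>y\<in>W. y \<noteq> zvec \<and> N < Min (supp y) \<longrightarrow> y \<in> Y"
    using WY unfolding almost_sub_def by blast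
  obtain W' where W': "block_subspace W'" "W' \<subseteq> W" "\<forall>z\<in>W'. z \<noteq> zvec \<longrightarrow> N < Min (supp z)"
    using block_subspace_beyond[OF W] by blast
  have "W' \<subseteq> Y"
  proof
    fix z assume "z \<in> W'"
    then show "z \<in> Y" using W' N zero_in_block_subspace[OF Y] by (cases "z = zvec") auto
  qed
  then show ?thesis using W' by blast
qed

text \<open>Fusion: a decreasing sequence of block subspaces admits a block subspace of the first
  one that is almost contained in all of them (a block sequence picking x_k in X_k).\<close>
lemma fusion:
  fixes Xs :: "nat \<Rightarrow> ('f::field) vec set"
  assumes blk: "\<And>k. block_subspace (Xs k)" and dec: "\<And>k. Xs (Suc k) \<subseteq> Xs k"
  shows "\<exists>X. block_subspace X \<and> X \<subseteq> Xs 0 \<and> (\<forall>k. almost_sub X (Xs k))"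
proof -
  have "\<forall>k (prev :: 'f vec). \<exists>x. x \<in> Xs k \<and> x \<noteq> zvec \<and> Max (supp prev) < Min (supp x)"
    using block_subspace_vector_beyond[OF blk] by blast
  then obtain next_vec :: "nat \<Rightarrow> 'f vec \<Rightarrow> 'f vec" where next_vec: "\<And>k prev. next_vec k prev \<in> Xs k \<and> next_vec k prev \<noteq> zvec \<and>
      Max (supp prev) < Min (supp (next_vec k prev))"
    by metis
  define b where "b = rec_nat (next_vec 0 zvec) (\<lambda>k. next_vec (Suc k))"
  have b0: "b 0 = next_vec 0 zvec" and bS: "b (Suc k) = next_vec (Suc k) (b k)" for k
    unfolding b_def by simp_all
  have b_in: "b k \<in> Xs k \<and> b k \<noteq> zvec" for k
    using next_vec by (cases k) (simp_all add: b0 bS)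
  have antimono: "Xs j \<subseteq> Xs i" if "i \<le> j" for i j using lift_Suc_antimono_le[of Xs, OF dec that] .
  have bs: "block_seq b"
    unfolding block_seq_def using b_in block_subspace_Evec[OF blk] next_vec bS by auto
  have tail_in: "lspan (\<lambda>i. b (i + Suc K)) \<subseteq> Xs (Suc K)" for K
    by (rule lspan_least[OF block_subspace_lin_closed[OF blk]])
      (use b_in antimono[of "Suc K" "_ + Suc K"] in auto)
  have sub0: "lspan b \<subseteq> Xs 0"
    by (rule lspan_least[OF block_subspace_lin_closed[OF blk]]) (use b_in antimono in blast)
  have "almost_sub (lspan b) (Xs k)" for k
  proof (cases k)
    case 0 then show ?thesis using sub0 subset_almost_sub by blast
  next
    case (Suc K)
    then show ?thesis
      unfolding almost_sub_def using lspan_late_vector[OF bs] tail_in[of K] by blast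
  qed
  then show ?thesis using bs sub0 unfolding block_subspace_def by blast
qed

section \<open>The games as conditions on plays\<close>

text \<open>A play is described by I's vectors x, I's integers n, II's vectors y and II's
  subspaces Z; the vectors played, in outcome order, are the interleaving of two of them.\<close>
definition interleave :: "(nat \<Rightarrow> 'a) \<Rightarrow> (nat \<Rightarrow> 'a) \<Rightarrow> nat \<Rightarrow> 'a" where
  "interleave a b = (\<lambda>i. if even i then a (i div 2) else b (i div 2))"

text \<open>Legality of the moves in B^T_W(u) for even |u| (order Z_k, x_k, n_k, y_k).\<close>
definition ev_Zmove :: "('f::field) vec set \<Rightarrow> (nat \<Rightarrow> 'f vec set) \<Rightarrow> nat \<Rightarrow> bool" where
  "ev_Zmove W Z k \<longleftrightarrow> block_subspace (Z k) \<and> Z k \<subseteq> W"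

definition ev_xmove :: "('f::field) vec list set \<Rightarrow> 'f vec list \<Rightarrow> (nat \<Rightarrow> 'f vec) \<Rightarrow>
    (nat \<Rightarrow> 'f vec) \<Rightarrow> (nat \<Rightarrow> 'f vec set) \<Rightarrow> nat \<Rightarrow> bool" where
  "ev_xmove T u x y Z k \<longleftrightarrow>
     x k \<in> Z k \<and> x k \<noteq> zvec \<and> u @ map (interleave x y) [0..<2*k+1] \<in> T"

definition ev_ymove :: "('f::field) vec list set \<Rightarrow> 'f vec set \<Rightarrow> 'f vec list \<Rightarrow>
    (nat \<Rightarrow> 'f vec) \<Rightarrow> (nat \<Rightarrow> nat) \<Rightarrow> (nat \<Rightarrow> 'f vec) \<Rightarrow> nat \<Rightarrow> bool" where
  "ev_ymove T W u x n y k \<longleftrightarrow> y k \<in> tail W (n k) \<and> u @ map (interleave x y) [0..<2*k+2] \<in> T"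

text \<open>I wins the play: she never moves illegally before II does, and if II always moves
  legally the outcome is in A.\<close>
definition even_play_won ::
  "('f::field) vec list set \<Rightarrow> 'f vec set \<Rightarrow> 'f vec list \<Rightarrow> (nat \<Rightarrow> 'f vec) set \<Rightarrow>
    (nat \<Rightarrow> 'f vec) \<Rightarrow> (nat \<Rightarrow> nat) \<Rightarrow> (nat \<Rightarrow> 'f vec) \<Rightarrow> (nat \<Rightarrow> 'f vec set) \<Rightarrow> bool" where
  "even_play_won T W u A x n y Z \<longleftrightarrow>
    (\<forall>k. (\<forall>j<k. ev_Zmove W Z j \<and> ev_xmove T u x y Z j \<and> ev_ymove T W u x n y j) \<and>
         ev_Zmove W Z k \<longrightarrow> ev_xmove T u x y Z k) \<and>
    ((\<forall>k. ev_Zmove W Z k \<and> ev_ymove T W u x n y k) \<longrightarrow> outcome u (interleave x y) \<in> A)"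

text \<open>Legality of the moves in B^T_W(u) for odd |u| (order n_k, (y_k, Z_k), x_k).\<close>
definition od_IImove :: "('f::field) vec list set \<Rightarrow> 'f vec set \<Rightarrow> 'f vec list \<Rightarrow>
    (nat \<Rightarrow> 'f vec) \<Rightarrow> (nat \<Rightarrow> nat) \<Rightarrow> (nat \<Rightarrow> 'f vec) \<Rightarrow> (nat \<Rightarrow> 'f vec set) \<Rightarrow> nat \<Rightarrow> bool" where
  "od_IImove T W u x n y Z k \<longleftrightarrow> y k \<in> tail W (n k) \<and>
     u @ map (interleave y x) [0..<2*k+1] \<in> T \<and> block_subspace (Z k) \<and> Z k \<subseteq> W"

definition od_xmove :: "('f::field) vec list set \<Rightarrow> 'f vec list \<Rightarrow> (nat \<Rightarrow> 'f vec) \<Rightarrow>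
    (nat \<Rightarrow> 'f vec) \<Rightarrow> (nat \<Rightarrow> 'f vec set) \<Rightarrow> nat \<Rightarrow> bool" where
  "od_xmove T u x y Z k \<longleftrightarrow>
     x k \<in> Z k \<and> x k \<noteq> zvec \<and> u @ map (interleave y x) [0..<2*k+2] \<in> T"

definition odd_play_won ::
  "('f::field) vec list set \<Rightarrow> 'f vec set \<Rightarrow> 'f vec list \<Rightarrow> (nat \<Rightarrow> 'f vec) set \<Rightarrow>
    (nat \<Rightarrow> 'f vec) \<Rightarrow> (nat \<Rightarrow> nat) \<Rightarrow> (nat \<Rightarrow> 'f vec) \<Rightarrow> (nat \<Rightarrow> 'f vec set) \<Rightarrow> bool" where
  "odd_play_won T W u A x n y Z \<longleftrightarrow>
    (\<forall>k. (\<forall>j<k. od_IImove T W u x n y Z j \<and> od_xmove T u x y Z j) \<and>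
         od_IImove T W u x n y Z k \<longrightarrow> od_xmove T u x y Z k) \<and>
    ((\<forall>k. od_IImove T W u x n y Z k) \<longrightarrow> outcome u (interleave y x) \<in> A)"

lemma I_wins_even_iff:
  "I_wins_even T W u A \<sigma> \<longleftrightarrow> (\<forall>m. even_play_won T W u A
     (\<lambda>k. fst (\<sigma> (map m [0..<Suc k]))) (\<lambda>k. snd (\<sigma> (map m [0..<Suc k])))
     (\<lambda>k. fst (m (Suc k))) (\<lambda>k. snd (m k)))"
  unfolding I_wins_even_def even_play_won_def ev_Zmove_def ev_xmove_def ev_ymove_def
    interleave_def Let_def by simp

lemma I_wins_odd_iff:
  "I_wins_odd T W u A \<sigma> \<longleftrightarrow> (\<forall>m. odd_play_won T W u A
     (\<lambda>k. fst (\<sigma> (map m [0..<Suc k]))) (\<lambda>k. snd (\<sigma> (map m [0..<k])))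
     (\<lambda>k. fst (m k)) (\<lambda>k. snd (m k)))"
  unfolding I_wins_odd_def odd_play_won_def od_IImove_def od_xmove_def interleave_def Let_def
  by simp

section \<open>Strategies survive passing to almost-subspaces\<close>

lemma win_condition_weaken:
  fixes Pz Px Py Qz Qx Qy :: "nat \<Rightarrow> bool"
  assumes won: "(\<forall>k. (\<forall>j<k. Pz j \<and> Px j \<and> Py j) \<and> Pz k \<longrightarrow> Px k) \<and>
                 ((\<forall>k. Pz k \<and> Py k) \<longrightarrow> R)"
    and z: "\<And>k. Qz k \<Longrightarrow> Pz k" and y: "\<And>k. Qy k \<Longrightarrow> Py k"
    and x: "\<And>k. Qz k \<Longrightarrow> Px k \<Longrightarrow> Qx k"
  shows "(\<forall>k. (\<forall>j<k. Qz j \<and> Qx j \<and> Qy j) \<and> Qz k \<longrightarrow> Qx k) \<and> ((\<forall>k. Qz k \<and> Qy k) \<longrightarrow> R)"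
proof -
  have history: "\<forall>j<k. Pz j \<and> Px j \<and> Py j" if "\<forall>j<k. Qz j \<and> Qy j" for k
    using that
  proof (induction k)
    case (Suc k)
    then have "\<forall>j<k. Pz j \<and> Px j \<and> Py j" "Pz k" "Py k" using z y by auto
    moreover from this have "Px k" using won by blast
    ultimately show ?case using less_Suc_eq by auto
  qed simp
  show ?thesis using history won z y x by blast
qed

lemma win_condition_weaken2:
  fixes Pz Px Qz Qx :: "nat \<Rightarrow> bool"
  assumes "(\<forall>k. (\<forall>j<k. Pz j \<and> Px j) \<and> Pz k \<longrightarrow> Px k) \<and> ((\<forall>k. Pz k) \<longrightarrow> R)"
    and "\<And>k. Qz k \<Longrightarrow> Pz k" and "\<And>k. Qz k \<Longrightarrow> Px k \<Longrightarrow> Qx k"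
  shows "(\<forall>k. (\<forall>j<k. Qz j \<and> Qx j) \<and> Qz k \<longrightarrow> Qx k) \<and> ((\<forall>k. Qz k) \<longrightarrow> R)"
  using win_condition_weaken[of Pz Px "\<lambda>_. True" R Qz "\<lambda>_. True" Qx] assms by auto

lemma even_play_transfer:
  assumes won: "even_play_won T W u A x n y Z0"
    and Z: "\<And>k. ev_Zmove W' Z k \<Longrightarrow> ev_Zmove W Z0 k \<and> Z0 k \<subseteq> Z k"
    and tails: "\<And>k z. z \<in> tail W' (n' k) \<Longrightarrow> z \<in> tail W (n k)"
  shows "even_play_won T W' u A x n' y Z"
  using won unfolding even_play_won_def
proof (rule win_condition_weaken)
  show "ev_ymove T W u x n y k" if "ev_ymove T W' u x n' y k" for k
    using that tails unfolding ev_ymove_def by blast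
  show "ev_xmove T u x y Z k" if "ev_Zmove W' Z k" "ev_xmove T u x y Z0 k" for k
    using that Z unfolding ev_xmove_def by blast
qed (use Z in blast)

lemma odd_play_transfer:
  assumes won: "odd_play_won T W u A x n y Z0"
    and Z: "\<And>k. block_subspace (Z k) \<Longrightarrow> Z k \<subseteq> W' \<Longrightarrow>
              block_subspace (Z0 k) \<and> Z0 k \<subseteq> W \<and> Z0 k \<subseteq> Z k"
    and tails: "\<And>k z. z \<in> tail W' (n' k) \<Longrightarrow> z \<in> tail W (n k)"
  shows "odd_play_won T W' u A x n' y Z"
  using won unfolding odd_play_won_def
proof (rule win_condition_weaken2)
  show "od_IImove T W u x n y Z0 k" if "od_IImove T W' u x n' y Z k" for k
    using that Z tails unfolding od_IImove_def by blast
  show "od_xmove T u x y Z k" if "od_IImove T W' u x n' y Z k" "od_xmove T u x y Z0 k" for k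
    using that Z unfolding od_IImove_def od_xmove_def by blast
qed

definition shrunk_strategy :: "('f::field vec set \<Rightarrow> 'f vec set) \<Rightarrow> nat \<Rightarrow>
    (('f vec \<times> 'f vec set) list \<Rightarrow> 'f vec \<times> nat) \<Rightarrow> ('f vec \<times> 'f vec set) list \<Rightarrow> 'f vec \<times> nat"
  where "shrunk_strategy f N \<sigma> l = (fst (\<sigma> (map (apsnd f) l)), max (snd (\<sigma> (map (apsnd f) l))) N)"

lemma I_wins_even_shrunk:
  fixes W W' :: "('f::field) vec set"
  assumes won: "I_wins_even T W u A \<sigma>"
    and f: "\<And>Z. block_subspace Z \<Longrightarrow> Z \<subseteq> W' \<Longrightarrow> block_subspace (f Z) \<and> f Z \<subseteq> W \<and> f Z \<subseteq> Z"
    and tails: "\<And>z n. z \<in> tail W' (max n N) \<Longrightarrow> z \<in> tail W n"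
  shows "I_wins_even T W' u A (shrunk_strategy f N \<sigma>)"
  unfolding I_wins_even_iff
proof
  fix m :: "nat \<Rightarrow> 'f vec \<times> 'f vec set"
  let ?\<sigma>' = "shrunk_strategy f N \<sigma>"
  have "even_play_won T W u A (\<lambda>k. fst (?\<sigma>' (map m [0..<Suc k])))
      (\<lambda>k. snd (\<sigma> (map (apsnd f) (map m [0..<Suc k])))) (\<lambda>k. fst (m (Suc k))) (\<lambda>k. f (snd (m k)))"
    using won[unfolded I_wins_even_iff, rule_format, of "apsnd f \<circ> m"]
    by (simp only: map_map[symmetric] shrunk_strategy_def comp_apply fst_apsnd snd_apsnd fst_conv)
  then show "even_play_won T W' u A (\<lambda>k. fst (?\<sigma>' (map m [0..<Suc k])))
      (\<lambda>k. snd (?\<sigma>' (map m [0..<Suc k]))) (\<lambda>k. fst (m (Suc k))) (\<lambda>k. snd (m k))"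
    by (rule even_play_transfer) (use f tails in \<open>auto simp: ev_Zmove_def shrunk_strategy_def\<close>)
qed

lemma I_wins_odd_shrunk:
  fixes W W' :: "('f::field) vec set"
  assumes won: "I_wins_odd T W u A \<sigma>"
    and f: "\<And>Z. block_subspace Z \<Longrightarrow> Z \<subseteq> W' \<Longrightarrow> block_subspace (f Z) \<and> f Z \<subseteq> W \<and> f Z \<subseteq> Z"
    and tails: "\<And>z n. z \<in> tail W' (max n N) \<Longrightarrow> z \<in> tail W n"
  shows "I_wins_odd T W' u A (shrunk_strategy f N \<sigma>)"
  unfolding I_wins_odd_iff
proof
  fix m :: "nat \<Rightarrow> 'f vec \<times> 'f vec set"
  let ?\<sigma>' = "shrunk_strategy f N \<sigma>"
  have "odd_play_won T W u A (\<lambda>k. fst (?\<sigma>' (map m [0..<Suc k])))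
      (\<lambda>k. snd (\<sigma> (map (apsnd f) (map m [0..<k])))) (\<lambda>k. fst (m k)) (\<lambda>k. f (snd (m k)))"
    using won[unfolded I_wins_odd_iff, rule_format, of "apsnd f \<circ> m"]
    by (simp only: map_map[symmetric] shrunk_strategy_def comp_apply fst_apsnd snd_apsnd fst_conv)
  then show "odd_play_won T W' u A (\<lambda>k. fst (?\<sigma>' (map m [0..<Suc k])))
      (\<lambda>k. snd (?\<sigma>' (map m [0..<k]))) (\<lambda>k. fst (m k)) (\<lambda>k. snd (m k))"
    by (rule odd_play_transfer) (use f tails in \<open>auto simp: shrunk_strategy_def\<close>)
qed

text \<open>If W' \<subseteq>* W, a strategy for I in B^T_W(u) yields one in B^T_W'(u): I replaces each
  subspace of II by a block subspace of it inside W, and raises her integers beyond the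
  coordinate witnessing W' \<subseteq>* W.\<close>
lemma strategy_almost_mono:
  fixes W W' :: "('f::field) vec set"
  assumes W: "block_subspace W" and W'W: "almost_sub W' W" and st: "I_has_strategy T W u A"
  shows "I_has_strategy T W' u A"
proof -
  obtain N where N: "\<forall>y\<in>W'. y \<noteq> zvec \<and> N < Min (supp y) \<longrightarrow> y \<in> W"
    using W'W unfolding almost_sub_def by blast
  have tails: "z \<in> tail W' (max n N) \<Longrightarrow> z \<in> tail W n" for z n
    unfolding tail_def using N by auto
  have "\<forall>Z. \<exists>Z'. block_subspace Z \<and> Z \<subseteq> W' \<longrightarrow> block_subspace Z' \<and> Z' \<subseteq> W \<and> Z' \<subseteq> Z"
    using almost_sub_shrink almost_sub_trans_subset W'W W by blast
  then obtain f where f: "\<And>Z. block_subspace Z \<Longrightarrow> Z \<subseteq> W' \<Longrightarrow>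
      block_subspace (f Z) \<and> f Z \<subseteq> W \<and> f Z \<subseteq> Z"
    by (metis choice)
  show ?thesis
    using st I_wins_even_shrunk[of T W u A _ W' f N] I_wins_odd_shrunk[of T W u A _ W' f N] f tails
    unfolding I_has_strategy_def by (metis (full_types))
qed

section \<open>Composing strategies after the first move\<close>

lemma interleave_Suc: "interleave y x (Suc i) = interleave x (\<lambda>k. y (Suc k)) i"
  unfolding interleave_def by auto

lemma position_shift:
  "u @ map (interleave y x) [0..<Suc j] = (u @ [y 0]) @ map (interleave x (\<lambda>k. y (Suc k))) [0..<j]"
  by (simp add: map_upt_Suc interleave_Suc del: upt_Suc) (simp add: interleave_def)

lemma outcome_shift:
  "outcome u (interleave y x) = outcome (u @ [y 0]) (interleave x (\<lambda>k. y (Suc k)))"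
proof
  fix i
  consider "i < length u" | "i = length u" | "length u < i" by arith
  then show "outcome u (interleave y x) i = outcome (u @ [y 0]) (interleave x (\<lambda>k. y (Suc k))) i"
  proof cases
    case 3
    then have "i - length u = Suc (i - Suc (length u))" by arith
    then show ?thesis using 3 unfolding outcome_def by (simp add: interleave_Suc)
  qed (auto simp: outcome_def nth_append interleave_def)
qed

lemma odd_play_from_even_play:
  assumes n0: "n 0 = 0"
    and rest: "y 0 \<in> tail W 0 \<Longrightarrow> u @ [y 0] \<in> T \<Longrightarrow>
       even_play_won T W (u @ [y 0]) A x (\<lambda>k. n (Suc k)) (\<lambda>k. y (Suc k)) Z"
  shows "odd_play_won T W u A x n y Z"
proof (cases "y 0 \<in> tail W 0 \<and> u @ [y 0] \<in> T")
  case True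
  let ?u' = "u @ [y 0]" and ?n' = "\<lambda>k. n (Suc k)" and ?y' = "\<lambda>k. y (Suc k)"
  have won: "even_play_won T W ?u' A x ?n' ?y' Z" using rest True by blast
  have II_Suc: "od_IImove T W u x n y Z (Suc k) \<longleftrightarrow>
      ev_ymove T W ?u' x ?n' ?y' k \<and> ev_Zmove W Z (Suc k)" for k
  proof -
    have idx: "2 * Suc k + 1 = Suc (2 * k + 2)" by simp
    show ?thesis unfolding od_IImove_def ev_ymove_def ev_Zmove_def idx position_shift by simp
  qed
  have x_same: "od_xmove T u x y Z k \<longleftrightarrow> ev_xmove T ?u' x ?y' Z k" for k
  proof -
    have idx: "2 * k + 2 = Suc (2 * k + 1)" by simp
    show ?thesis unfolding od_xmove_def ev_xmove_def idx position_shift by simp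
  qed
  have II_Z: "od_IImove T W u x n y Z k \<Longrightarrow> ev_Zmove W Z k" for k
    unfolding od_IImove_def ev_Zmove_def by blast
  have II_all: "(\<forall>j<k. od_IImove T W u x n y Z j) \<Longrightarrow> od_IImove T W u x n y Z k \<Longrightarrow>
      \<forall>j<k. ev_ymove T W ?u' x ?n' ?y' j" for k
    using II_Suc by (metis Suc_lessI)
  show ?thesis
    unfolding odd_play_won_def
  proof (intro conjI allI impI)
    fix k assume "(\<forall>j<k. od_IImove T W u x n y Z j \<and> od_xmove T u x y Z j) \<and> od_IImove T W u x n y Z k"
    then have "ev_xmove T ?u' x ?y' Z k"
      using won II_all[of k] II_Z x_same unfolding even_play_won_def by blast
    then show "od_xmove T u x y Z k" using x_same by blast
  next
    assume "\<forall>k. od_IImove T W u x n y Z k"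
    then have "outcome ?u' (interleave x ?y') \<in> A"
      using won II_Suc II_Z unfolding even_play_won_def by blast
    then show "outcome u (interleave y x) \<in> A" using outcome_shift by metis
  qed
next
  case False
  then have "\<not> od_IImove T W u x n y Z 0"
    using n0 unfolding od_IImove_def by (auto simp: interleave_def)
  then show ?thesis unfolding odd_play_won_def by (metis gr0I)
qed

lemma even_play_from_odd_play:
  assumes rest: "ev_Zmove W Z 0 \<Longrightarrow> x 0 \<in> Z 0 \<and> x 0 \<noteq> zvec \<and> u @ [x 0] \<in> T \<and>
       odd_play_won T W (u @ [x 0]) A (\<lambda>k. x (Suc k)) n y (\<lambda>k. Z (Suc k))"
  shows "even_play_won T W u A x n y Z"
proof (cases "ev_Zmove W Z 0")
  case True
  let ?u' = "u @ [x 0]" and ?x' = "\<lambda>k. x (Suc k)" and ?Z' = "\<lambda>k. Z (Suc k)"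
  have x0: "x 0 \<in> Z 0" "x 0 \<noteq> zvec" "?u' \<in> T" and won: "odd_play_won T W ?u' A ?x' n y ?Z'"
    using rest True by blast+
  have II_same: "od_IImove T W ?u' ?x' n y ?Z' k \<longleftrightarrow> ev_ymove T W u x n y k \<and> ev_Zmove W Z (Suc k)"
    for k
  proof -
    have idx: "2 * k + 2 = Suc (2 * k + 1)" by simp
    show ?thesis unfolding od_IImove_def ev_ymove_def ev_Zmove_def idx position_shift by simp
  qed
  have x_Suc: "ev_xmove T u x y Z (Suc k) \<longleftrightarrow> od_xmove T ?u' ?x' y ?Z' k" for k
  proof -
    have idx: "2 * Suc k + 1 = Suc (2 * k + 2)" by simp
    show ?thesis unfolding od_xmove_def ev_xmove_def idx position_shift by simp
  qed
  have x_first: "ev_xmove T u x y Z 0"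
    using x0 unfolding ev_xmove_def by (simp add: interleave_def)
  show ?thesis
    unfolding even_play_won_def
  proof (intro conjI allI impI)
    fix k assume legal: "(\<forall>j<k. ev_Zmove W Z j \<and> ev_xmove T u x y Z j \<and> ev_ymove T W u x n y j) \<and>
      ev_Zmove W Z k"
    show "ev_xmove T u x y Z k"
    proof (cases k)
      case (Suc k')
      have "\<forall>j<k'. od_IImove T W ?u' ?x' n y ?Z' j \<and> od_xmove T ?u' ?x' y ?Z' j"
        "od_IImove T W ?u' ?x' n y ?Z' k'"
        using legal Suc II_same x_Suc by auto
      then show ?thesis using won Suc x_Suc unfolding odd_play_won_def by blast
    qed (use x_first in simp)
  next
    assume "\<forall>k. ev_Zmove W Z k \<and> ev_ymove T W u x n y k"
    then have "outcome ?u' (interleave y ?x') \<in> A"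
      using won II_same unfolding odd_play_won_def by blast
    then show "outcome u (interleave x y) \<in> A" using outcome_shift by metis
  qed
next
  case False
  then show ?thesis unfolding even_play_won_def by (metis gr0I)
qed

text \<open>Odd position: if I has a strategy from u ^ y for every legal first vector y of II,
  she has one from u (play n_0 = 0, then follow the strategy for the y_0 actually played).\<close>
lemma I_strategy_odd_step:
  fixes W :: "('f::field) vec set"
  assumes odd: "odd (length u)"
    and after: "\<forall>y\<in>tail W 0. u @ [y] \<in> T \<longrightarrow> I_has_strategy T W (u @ [y]) A"
  shows "I_has_strategy T W u A"
proof -
  have "\<forall>y. \<exists>\<sigma>. y \<in> tail W 0 \<and> u @ [y] \<in> T \<longrightarrow> I_wins_even T W (u @ [y]) A \<sigma>"
    using after odd by (simp add: I_has_strategy_def)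
  then obtain S where S: "\<And>y. y \<in> tail W 0 \<Longrightarrow> u @ [y] \<in> T \<Longrightarrow> I_wins_even T W (u @ [y]) A (S y)"
    by (metis choice)
  define \<sigma> where "\<sigma> l = (case l of [] \<Rightarrow> (zvec, 0) | q # _ \<Rightarrow> S (fst q) l)" for l
  have "I_wins_odd T W u A \<sigma>"
    unfolding I_wins_odd_iff
  proof
    fix m :: "nat \<Rightarrow> 'f vec \<times> 'f vec set"
    let ?y0 = "fst (m 0)"
    have \<sigma>_after: "\<sigma> (map m [0..<Suc k]) = S ?y0 (map m [0..<Suc k])" for k
      by (simp add: \<sigma>_def map_upt_Suc del: upt_Suc)
    show "odd_play_won T W u A (\<lambda>k. fst (\<sigma> (map m [0..<Suc k]))) (\<lambda>k. snd (\<sigma> (map m [0..<k])))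
        (\<lambda>k. fst (m k)) (\<lambda>k. snd (m k))"
    proof (rule odd_play_from_even_play)
      assume "?y0 \<in> tail W 0" "u @ [?y0] \<in> T"
      then show "even_play_won T W (u @ [?y0]) A (\<lambda>k. fst (\<sigma> (map m [0..<Suc k])))
          (\<lambda>k. snd (\<sigma> (map m [0..<Suc k]))) (\<lambda>k. fst (m (Suc k))) (\<lambda>k. snd (m k))"
        unfolding \<sigma>_after using S[unfolded I_wins_even_iff, rule_format, of ?y0 m] by blast
    qed (simp add: \<sigma>_def)
  qed
  then show ?thesis unfolding I_has_strategy_def using odd by auto
qed

lemma I_strategy_even_step:
  fixes W :: "('f::field) vec set"
  assumes ev: "even (length u)"
    and after: "\<forall>Z. block_subspace Z \<and> Z \<subseteq> W \<longrightarrow>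
                  (\<exists>x\<in>Z. x \<noteq> zvec \<and> u @ [x] \<in> T \<and> I_has_strategy T W (u @ [x]) A)"
  shows "I_has_strategy T W u A"
proof -
  obtain choice where choice: "\<And>Z. block_subspace Z \<Longrightarrow> Z \<subseteq> W \<Longrightarrow> choice Z \<in> Z \<and>
      choice Z \<noteq> zvec \<and> u @ [choice Z] \<in> T \<and> I_has_strategy T W (u @ [choice Z]) A"
    using after by metis
  have "\<forall>c. \<exists>\<sigma>. I_has_strategy T W (u @ [c]) A \<longrightarrow> I_wins_odd T W (u @ [c]) A \<sigma>"
    using ev by (simp add: I_has_strategy_def)
  then obtain S where S: "\<And>c. I_has_strategy T W (u @ [c]) A \<Longrightarrow> I_wins_odd T W (u @ [c]) A (S c)"
    by (metis choice)
  define \<sigma> where "\<sigma> l = (case l of [] \<Rightarrow> (zvec, 0) | q # l' \<Rightarrow>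
      (if l' = [] then choice (snd q) else fst (S (choice (snd q)) l'), snd (S (choice (snd q)) l')))"
    for l
  have "I_wins_even T W u A \<sigma>"
    unfolding I_wins_even_iff
  proof
    fix m :: "nat \<Rightarrow> 'f vec \<times> 'f vec set"
    let ?c = "choice (snd (m 0))" and ?m' = "\<lambda>k. m (Suc k)"
    have \<sigma>_first: "fst (\<sigma> (map m [0..<Suc 0])) = ?c"
      by (simp add: \<sigma>_def)
    have \<sigma>_after: "fst (\<sigma> (map m [0..<Suc (Suc k)])) = fst (S ?c (map ?m' [0..<Suc k]))"
        "snd (\<sigma> (map m [0..<Suc k])) = snd (S ?c (map ?m' [0..<k]))" for k
      by (simp_all add: \<sigma>_def map_upt_Suc[of m] del: upt_Suc)
    show "even_play_won T W u A (\<lambda>k. fst (\<sigma> (map m [0..<Suc k]))) (\<lambda>k. snd (\<sigma> (map m [0..<Suc k])))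
        (\<lambda>k. fst (m (Suc k))) (\<lambda>k. snd (m k))"
    proof (rule even_play_from_odd_play)
      assume "ev_Zmove W (\<lambda>k. snd (m k)) 0"
      then have c: "?c \<in> snd (m 0) \<and> ?c \<noteq> zvec \<and> u @ [?c] \<in> T \<and> I_has_strategy T W (u @ [?c]) A"
        using choice unfolding ev_Zmove_def by blast
      then have "odd_play_won T W (u @ [?c]) A (\<lambda>k. fst (S ?c (map ?m' [0..<Suc k])))
          (\<lambda>k. snd (S ?c (map ?m' [0..<k]))) (\<lambda>k. fst (?m' k)) (\<lambda>k. snd (?m' k))"
        using S[unfolded I_wins_odd_iff, rule_format, of ?c ?m'] by blast
      then show "fst (\<sigma> (map m [0..<Suc 0])) \<in> snd (m 0) \<and> fst (\<sigma> (map m [0..<Suc 0])) \<noteq> zvec \<and>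
          u @ [fst (\<sigma> (map m [0..<Suc 0]))] \<in> T \<and>
          odd_play_won T W (u @ [fst (\<sigma> (map m [0..<Suc 0]))]) A
            (\<lambda>k. fst (\<sigma> (map m [0..<Suc (Suc k)]))) (\<lambda>k. snd (\<sigma> (map m [0..<Suc k])))
            (\<lambda>k. fst (m (Suc k))) (\<lambda>k. snd (m (Suc k)))"
        using c unfolding \<sigma>_first \<sigma>_after by blast
    qed
  qed
  then show ?thesis unfolding I_has_strategy_def using ev by auto
qed


section \<open>Deciding all first moves at once\<close>

text \<open>E is countable: every finitely supported vector is the padding of a finite list.\<close>
lemma countable_Evec: "countable (Evec :: ('f::{field,countable}) vec set)"
proof (rule countable_subset)
  let ?vec_of = "\<lambda>xs :: 'f list. \<lambda>i. if i < length xs then xs ! i else 0"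
  show "Evec \<subseteq> range ?vec_of"
  proof
    fix x :: "'f vec" assume "x \<in> Evec"
    then obtain B where B: "{n. x n \<noteq> 0} \<subseteq> {..<B}"
      unfolding Evec_def using finite_nat_bounded by blast
    have "x = ?vec_of (map x [0..<B])" using B by (auto simp: fun_eq_iff)
    then show "x \<in> range ?vec_of" by blast
  qed
qed simp

definition almost_monotone :: "(('f::field) vec set \<Rightarrow> 'f vec \<Rightarrow> bool) \<Rightarrow> bool" where
  "almost_monotone S \<longleftrightarrow>
     (\<forall>W W' x. block_subspace W \<and> almost_sub W' W \<and> S W x \<longrightarrow> S W' x)"

lemma never_almost_sub:
  assumes mono: "almost_monotone S"
    and never: "\<forall>W. block_subspace W \<and> W \<subseteq> Y \<longrightarrow> \<not> S W x"
    and Y: "block_subspace Y" and XY: "almost_sub X Y"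
  shows "\<forall>W. block_subspace W \<and> W \<subseteq> X \<longrightarrow> \<not> S W x"
proof (intro allI impI notI)
  fix W assume W: "block_subspace W \<and> W \<subseteq> X" and "S W x"
  obtain W' where W': "block_subspace W'" "W' \<subseteq> W" "W' \<subseteq> Y"
    using almost_sub_shrink[OF _ almost_sub_trans_subset[OF _ XY] Y] W by blast
  have "S W' x" using mono subset_almost_sub[OF W'(2)] \<open>S W x\<close> W unfolding almost_monotone_def by blast
  then show False using never W' by blast
qed

text \<open>Enumerate E, shrink V
  successively to decide the k-th vector, and fuse.\<close>
lemma decide_all_vectors:
  fixes S :: "('f::{field,countable}) vec set \<Rightarrow> 'f vec \<Rightarrow> bool" and V :: "'f vec set"
  assumes mono: "almost_monotone S"
    and V: "block_subspace V"
  shows "\<exists>X. block_subspace X \<and> X \<subseteq> V \<and> (\<forall>x\<in>Evec.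
           (\<forall>W. block_subspace W \<and> W \<subseteq> X \<longrightarrow> \<not> S W x) \<or> (\<forall>W. block_subspace W \<and> W \<subseteq> X \<longrightarrow> S W x))"
proof -
  define e where "e = from_nat_into (Evec :: 'f vec set)"
  define never where "never X x \<longleftrightarrow> (\<forall>W. block_subspace W \<and> W \<subseteq> X \<longrightarrow> \<not> S W x)" for X x
  define shrink where "shrink k X =
      (if never X (e k) then X else SOME W. block_subspace W \<and> W \<subseteq> X \<and> S W (e k))" for k X
  have shrink: "block_subspace (shrink k X) \<and> shrink k X \<subseteq> X \<and>
      (never X (e k) \<or> S (shrink k X) (e k))" if "block_subspace X" for k X
  proof (cases "never X (e k)")
    case False
    then have "\<exists>W. block_subspace W \<and> W \<subseteq> X \<and> S W (e k)" unfolding never_def by blast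
    then have "block_subspace (shrink k X) \<and> shrink k X \<subseteq> X \<and> S (shrink k X) (e k)"
      unfolding shrink_def using False by simp (rule someI_ex)
    then show ?thesis by blast
  qed (simp add: shrink_def that)
  define Xs where "Xs = rec_nat V shrink"
  have Xs0: "Xs 0 = V" and XsS: "Xs (Suc k) = shrink k (Xs k)" for k
    unfolding Xs_def by simp_all
  have blk: "block_subspace (Xs k)" for k by (induction k) (simp_all add: Xs0 V XsS shrink)
  obtain X where X: "block_subspace X" "X \<subseteq> V" "\<forall>k. almost_sub X (Xs k)"
    using fusion[of Xs] blk shrink XsS Xs0 by metis
  have "never X x \<or> (\<forall>W. block_subspace W \<and> W \<subseteq> X \<longrightarrow> S W x)" if xE: "x \<in> Evec" for x
  proof -
    obtain k where k: "e k = x" unfolding e_def using from_nat_into_surj[OF countable_Evec xE] by blast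
    show ?thesis
    proof (cases "never (Xs k) x")
      case True
      then show ?thesis
        using never_almost_sub[OF mono _ blk] X(3) unfolding never_def by blast
    next
      case False
      then have "S (Xs (Suc k)) x" using shrink[OF blk, of k] XsS k by auto
      then show ?thesis
        using mono blk almost_sub_trans_subset X(3) unfolding almost_monotone_def by blast
    qed
  qed
  then show ?thesis using X(1,2) unfolding never_def by blast
qed

lemma strategies_decided:
  fixes V :: "('f::{field,countable}) vec set"
  assumes "block_subspace V"
  shows "\<exists>X. block_subspace X \<and> X \<subseteq> V \<and> (\<forall>x\<in>Evec.
           (\<forall>W. block_subspace W \<and> W \<subseteq> X \<longrightarrow> \<not> I_has_strategy T W (v @ [x]) A) \<or>
           (\<forall>W. block_subspace W \<and> W \<subseteq> X \<longrightarrow> I_has_strategy T W (v @ [x]) A))"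
proof (rule decide_all_vectors)
  show "almost_monotone (\<lambda>W x. I_has_strategy T W (v @ [x]) A)"
    unfolding almost_monotone_def using strategy_almost_mono by blast
qed (rule assms)

text \<open>Part (a): below a deciding X, any Y \<subseteq> X contains a first move of II after which I
  has no strategy in Y (else I would win B^T_Y(v)), hence none in any W \<subseteq> X.\<close>
lemma no_strategy_odd_position:
  fixes V :: "('f::{field,countable}) vec set"
  assumes V: "block_subspace V" and odd: "odd (length v)"
    and none: "\<forall>W. block_subspace W \<and> W \<subseteq> V \<longrightarrow> \<not> I_has_strategy T W v A"
  shows "\<exists>X. block_subspace X \<and> X \<subseteq> V \<and>
           (\<forall>Y. block_subspace Y \<and> Y \<subseteq> X \<longrightarrow>
              (\<exists>x\<in>Y. x \<noteq> zvec \<and> v @ [x] \<in> T \<and>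
                 (\<forall>W. block_subspace W \<and> W \<subseteq> X \<longrightarrow> \<not> I_has_strategy T W (v @ [x]) A)))"
proof -
  obtain X where X: "block_subspace X" "X \<subseteq> V" and decided: "\<forall>x\<in>Evec.
      (\<forall>W. block_subspace W \<and> W \<subseteq> X \<longrightarrow> \<not> I_has_strategy T W (v @ [x]) A) \<or>
      (\<forall>W. block_subspace W \<and> W \<subseteq> X \<longrightarrow> I_has_strategy T W (v @ [x]) A)"
    using strategies_decided[where T = T and v = v and A = A, OF V] by blast
  have "\<exists>x\<in>Y. x \<noteq> zvec \<and> v @ [x] \<in> T \<and>
      (\<forall>W. block_subspace W \<and> W \<subseteq> X \<longrightarrow> \<not> I_has_strategy T W (v @ [x]) A)"
    if Y: "block_subspace Y" "Y \<subseteq> X" for Y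
  proof -
    have "\<not> I_has_strategy T Y v A" using none Y X(2) by blast
    then obtain y where y: "y \<in> tail Y 0" "v @ [y] \<in> T" "\<not> I_has_strategy T Y (v @ [y]) A"
      using I_strategy_odd_step[where W = Y and T = T and A = A, OF odd] by blast
    then have yY: "y \<in> Y" "y \<noteq> zvec" unfolding tail_def by auto
    then have "y \<in> Evec" using block_subspace_Evec[OF Y(1)] by blast
    then have "\<forall>W. block_subspace W \<and> W \<subseteq> X \<longrightarrow> \<not> I_has_strategy T W (v @ [y]) A"
      using decided y(3) Y by blast
    then show ?thesis using yY y(2) by blast
  qed
  then show ?thesis using X by blast
qed

text \<open>Part (b): pass to a subspace where every vector is T-legal, decide there, and use that I
  cannot win B^T_X(v) to find Z \<subseteq> X all of whose first moves leave I without strategy.\<close>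
lemma no_strategy_even_position:
  fixes V :: "('f::{field,countable}) vec set"
  assumes V: "block_subspace V" and ev: "even (length v)"
    and legal: "\<exists>n. \<forall>z\<in>tail V n. v @ [z] \<in> T"
    and none: "\<forall>W. block_subspace W \<and> W \<subseteq> V \<longrightarrow> \<not> I_has_strategy T W v A"
  shows "\<exists>X. block_subspace X \<and> X \<subseteq> V \<and> (\<forall>x\<in>X. x \<noteq> zvec \<longrightarrow> v @ [x] \<in> T) \<and>
           (\<forall>x\<in>X. x \<noteq> zvec \<longrightarrow>
              (\<forall>W. block_subspace W \<and> W \<subseteq> X \<longrightarrow> \<not> I_has_strategy T W (v @ [x]) A))"
proof -
  obtain n where n: "\<forall>z\<in>tail V n. v @ [z] \<in> T" using legal by blast
  obtain V' where V': "block_subspace V'" "V' \<subseteq> V" "\<forall>z\<in>V'. z \<noteq> zvec \<longrightarrow> n < Min (supp z)"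
    using block_subspace_beyond[OF V] by blast
  have V'_legal: "v @ [x] \<in> T" if "x \<in> V'" "x \<noteq> zvec" for x
    using n V' that unfolding tail_def by blast
  obtain X where X: "block_subspace X" "X \<subseteq> V'" and decided: "\<forall>x\<in>Evec.
      (\<forall>W. block_subspace W \<and> W \<subseteq> X \<longrightarrow> \<not> I_has_strategy T W (v @ [x]) A) \<or>
      (\<forall>W. block_subspace W \<and> W \<subseteq> X \<longrightarrow> I_has_strategy T W (v @ [x]) A)"
    using strategies_decided[where T = T and v = v and A = A, OF V'(1)] by blast
  have "\<not> I_has_strategy T X v A" using none X V'(2) by blast
  then obtain Z where Z: "block_subspace Z" "Z \<subseteq> X"
      and Z_bad: "\<forall>x\<in>Z. x \<noteq> zvec \<and> v @ [x] \<in> T \<longrightarrow> \<not> I_has_strategy T X (v @ [x]) A"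
    using I_strategy_even_step[where W = X and T = T and A = A, OF ev] by blast
  have "\<forall>W. block_subspace W \<and> W \<subseteq> Z \<longrightarrow> \<not> I_has_strategy T W (v @ [x]) A"
    if x: "x \<in> Z" "x \<noteq> zvec" for x
  proof -
    have "\<not> I_has_strategy T X (v @ [x]) A" using Z_bad V'_legal x Z(2) X(2) by blast
    moreover have "x \<in> Evec" using x block_subspace_Evec[OF Z(1)] by blast
    ultimately have "\<forall>W. block_subspace W \<and> W \<subseteq> X \<longrightarrow> \<not> I_has_strategy T W (v @ [x]) A"
      using decided X(1) by blast
    then show ?thesis using Z(2) by blast
  qed
  moreover have "Z \<subseteq> V'" using Z(2) X(2) by blast
  ultimately show ?thesis using Z(1) V'(2) V'_legal by blast
qed

theorem mainTheorem6:
  fixes A :: "(nat \<Rightarrow> ('f::{field,countable}) vec) set"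
    and V :: "'f vec set" and v :: "'f vec list" and T :: "'f vec list set"
  assumes "A \<subseteq> {s. \<forall>i. s i \<in> Evec}"
    and "block_subspace V"
    and "fin_block v"
    and "is_rule V v T"
    and "\<forall>W. block_subspace W \<and> W \<subseteq> V \<longrightarrow> \<not> I_has_strategy T W v A"
  shows "(odd (length v) \<longrightarrow>
            (\<exists>X. block_subspace X \<and> X \<subseteq> V \<and>
               (\<forall>Y. block_subspace Y \<and> Y \<subseteq> X \<longrightarrow>
                  (\<exists>x\<in>Y. x \<noteq> zvec \<and> v @ [x] \<in> T \<and>
                     (\<forall>W. block_subspace W \<and> W \<subseteq> X \<longrightarrow> \<not> I_has_strategy T W (v @ [x]) A)))))
       \<and> (even (length v) \<longrightarrow>
            (\<exists>X. block_subspace X \<and> X \<subseteq> V \<and>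
               (\<forall>x\<in>X. x \<noteq> zvec \<longrightarrow> v @ [x] \<in> T) \<and>
               (\<forall>x\<in>X. x \<noteq> zvec \<longrightarrow>
                  (\<forall>W. block_subspace W \<and> W \<subseteq> X \<longrightarrow> \<not> I_has_strategy T W (v @ [x]) A))))"
proof (intro conjI impI)
  assume odd: "odd (length v)"
  show "\<exists>X. block_subspace X \<and> X \<subseteq> V \<and>
               (\<forall>Y. block_subspace Y \<and> Y \<subseteq> X \<longrightarrow>
                  (\<exists>x\<in>Y. x \<noteq> zvec \<and> v @ [x] \<in> T \<and>
                     (\<forall>W. block_subspace W \<and> W \<subseteq> X \<longrightarrow> \<not> I_has_strategy T W (v @ [x]) A)))"
    by (rule no_strategy_odd_position[OF assms(2) odd assms(5)])
next
  assume ev: "even (length v)"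
  have legal: "\<exists>n. \<forall>z\<in>tail V n. v @ [z] \<in> T"
    using assms(4) ev unfolding is_rule_def by blast
  show "\<exists>X. block_subspace X \<and> X \<subseteq> V \<and> (\<forall>x\<in>X. x \<noteq> zvec \<longrightarrow> v @ [x] \<in> T) \<and>
               (\<forall>x\<in>X. x \<noteq> zvec \<longrightarrow>
                  (\<forall>W. block_subspace W \<and> W \<subseteq> X \<longrightarrow> \<not> I_has_strategy T W (v @ [x]) A))"
    by (rule no_strategy_even_position[OF assms(2) ev legal assms(5)])
qed

end
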